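(* Let $(\mathcal{M},\times,1)$ be a cartesian monoidal category with equivalences. Let $Y:\Gamma^{\mathrm{op}}\to\mathcal{M}$ be a functor and let $(X,\xi):(\Phi,+,0)\to(\mathcal{M},\times,1)$ be the colax symmetric monoidal functor corresponding to $Y$ (as described in the context). The following are equivalent: (1) $(X,\xi)$ is a homotopy commutative monoid in $\mathcal{M}$, i.e. $\xi_0$ and every $\xi_{m,n}$ ($m,n\ge0$) are equivalences; (2) for all $m,n\ge 0$ the map $(Y(\pi^1_{m,n}),Y(\pi^2_{m,n})):Y[m+n]\to Y[m]\times Y[n]$ is an equivalence, and so is the unique map $Y[0]\to 1$; (3) for every $n\ge 0$ the map $(Y(\rho^n_0),\dots,Y(\rho^n_{n-1})):Y[n]\to Y[1]^n$ is an equivalence.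
   Context: A monoidal category with equivalences is a monoidal category $\mathcal{M}$ with a class $\mathcal{E}$ of morphisms (the equivalences) such that: every isomorphism is in $\mathcal{E}$; if $h=g\circ f$ and two of $f,g,h$ are in $\mathcal{E}$ then so is the third; if $f,f'\in\mathcal{E}$ then $f\otimes f'\in\mathcal{E}$. It is cartesian if the monoidal structure is given by chosen binary products $\times$ and a terminal object $1$. $\Phi$: objects $n=\{0,\dots,n-1\}$ ($n\ge0$), all functions, symmetric monoidal under disjoint union $+$ with unit $0$. $\Gamma^{\mathrm{op}}$: objects $[n]=\{0,\dots,n\}$, morphisms basepoint-preserving functions ($g(0)=0$). Maps in $\Gamma^{\mathrm{op}}$: $\pi^1_{m,n}:[m+n]\to[m]$, $\pi^1_{m,n}(i)=i$ for $i\le m$ and $0$ for $i>m$; $\pi^2_{m,n}:[m+n]\to[n]$, $\pi^2_{m,n}(i)=0$ for $i\le m$ and $i-m$ for $i>m$; for $0\le j<n$, $\rho^n_j:[n]\to[1]$, $\rho^n_j(i)=1$ if $i=j+1$ and $0$ otherwise. Correspondence: given $Y$, set $X(n)=Y[n]$; for $f:n\to n'$ in $\Phi$ set $X(f)=Y(g_f)$ where $g_f:[n]\to[n']$, $g_f(0)=0$, $g_f(i)=1+f(i-1)$ for $1\le i\le n$; $\xi_0:X(0)\to 1$ is the unique map; $\xi_{m,n}=(Y(\pi^1_{m,n}),Y(\pi^2_{m,n})):X(m+n)\to X(m)\times X(n)$. This defines a colax symmetric monoidal functor (a functor $X$ with natural maps $\xi_{A,B}:X(A+B)\to X(A)\times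 X(B)$, $\xi_0:X(0)\to 1$ satisfying the coassociativity, counit and symmetry axioms of a symmetric monoidal functor, not necessarily invertible), and every colax symmetric monoidal functor $(\Phi,+,0)\to(\mathcal{M},\times,1)$ arises from exactly one $Y$ in this way. *)

theory Defs
  imports Main
begin

record ('o,'m) cat =
  Obj :: "'o set"
  Arr :: "'m set"
  Dom :: "'m \<Rightarrow> 'o"
  Cod :: "'m \<Rightarrow> 'o"
  Id  :: "'o \<Rightarrow> 'm"
  Comp :: "'m \<Rightarrow> 'm \<Rightarrow> 'm"   (* Comp C g f = g \<circ> f *)

definition hom :: "('o,'m) cat \<Rightarrow> 'o \<Rightarrow> 'o \<Rightarrow> 'm set" where
  "hom C a b = {f \<in> Arr C. Dom C f = a \<and> Cod C f = b}"

definition category :: "('o,'m) cat \<Rightarrow> bool" where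
  "category C \<longleftrightarrow>
     (\<forall>f\<in>Arr C. Dom C f \<in> Obj C \<and> Cod C f \<in> Obj C) \<and>
     (\<forall>a\<in>Obj C. Id C a \<in> hom C a a) \<and>
     (\<forall>f\<in>Arr C. \<forall>g\<in>Arr C. Cod C f = Dom C g \<longrightarrow>
         Comp C g f \<in> hom C (Dom C f) (Cod C g)) \<and>
     (\<forall>f\<in>Arr C. Comp C (Id C (Cod C f)) f = f \<and> Comp C f (Id C (Dom C f)) = f) \<and>
     (\<forall>f\<in>Arr C. \<forall>g\<in>Arr C. \<forall>h\<in>Arr C. Cod C f = Dom C g \<longrightarrow> Cod C g = Dom C h \<longrightarrow>
         Comp C h (Comp C g f) = Comp C (Comp C h g) f)"

definition iso :: "('o,'m) cat \<Rightarrow> 'm \<Rightarrow> bool" where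
  "iso C f \<longleftrightarrow> f \<in> Arr C \<and> (\<exists>g \<in> hom C (Cod C f) (Dom C f).
      Comp C g f = Id C (Dom C f) \<and> Comp C f g = Id C (Cod C f))"

record ('o,'m) cartesian =
  Prod :: "'o \<Rightarrow> 'o \<Rightarrow> 'o"
  Pr1  :: "'o \<Rightarrow> 'o \<Rightarrow> 'm"
  Pr2  :: "'o \<Rightarrow> 'o \<Rightarrow> 'm"
  Pair :: "'m \<Rightarrow> 'm \<Rightarrow> 'm"
  Term :: "'o"
  Bang :: "'o \<Rightarrow> 'm"

definition cartesian_structure :: "('o,'m) cat \<Rightarrow> ('o,'m) cartesian \<Rightarrow> bool" where
  "cartesian_structure C K \<longleftrightarrow>
     (\<forall>a\<in>Obj C. \<forall>b\<in>Obj C. Prod K a b \<in> Obj C \<and>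
        Pr1 K a b \<in> hom C (Prod K a b) a \<and> Pr2 K a b \<in> hom C (Prod K a b) b) \<and>
     (\<forall>a\<in>Obj C. \<forall>b\<in>Obj C. \<forall>c\<in>Obj C. \<forall>f\<in>hom C c a. \<forall>g\<in>hom C c b.
        Pair K f g \<in> hom C c (Prod K a b) \<and>
        Comp C (Pr1 K a b) (Pair K f g) = f \<and> Comp C (Pr2 K a b) (Pair K f g) = g \<and>
        (\<forall>h\<in>hom C c (Prod K a b). Comp C (Pr1 K a b) h = f \<and> Comp C (Pr2 K a b) h = g
             \<longrightarrow> h = Pair K f g)) \<and>
     Term K \<in> Obj C \<and>
     (\<forall>a\<in>Obj C. Bang K a \<in> hom C a (Term K) \<and> (\<forall>h\<in>hom C a (Term K). h = Bang K a))"

definition tensor :: "('o,'m) cat \<Rightarrow> ('o,'m) cartesian \<Rightarrow> 'm \<Rightarrow> 'm \<Rightarrow> 'm" where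
  "tensor C K f f' = Pair K (Comp C f (Pr1 K (Dom C f) (Dom C f')))
                            (Comp C f' (Pr2 K (Dom C f) (Dom C f')))"

definition cartesian_cat_with_equivalences ::
  "('o,'m) cat \<Rightarrow> ('o,'m) cartesian \<Rightarrow> 'm set \<Rightarrow> bool" where
  "cartesian_cat_with_equivalences C K E \<longleftrightarrow>
     category C \<and> cartesian_structure C K \<and> E \<subseteq> Arr C \<and>
     (\<forall>f. iso C f \<longrightarrow> f \<in> E) \<and>
     (\<forall>f\<in>Arr C. \<forall>g\<in>Arr C. Cod C f = Dom C g \<longrightarrow>
        ((f \<in> E \<and> g \<in> E \<longrightarrow> Comp C g f \<in> E) \<and>
         (f \<in> E \<and> Comp C g f \<in> E \<longrightarrow> g \<in> E) \<and>
         (g \<in> E \<and> Comp C g f \<in> E \<longrightarrow> f \<in> E))) \<and>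
     (\<forall>f\<in>E. \<forall>f'\<in>E. tensor C K f f' \<in> E)"

text \<open>A morphism [m] \<rightarrow> [n] of Gamma^op is represented by a function g :: nat \<Rightarrow> nat
  with g 0 = 0 and g i \<le> n for i \<le> m; only its values on {0..m} matter.\<close>
definition Gamma_hom :: "nat \<Rightarrow> nat \<Rightarrow> (nat \<Rightarrow> nat) \<Rightarrow> bool" where
  "Gamma_hom m n g \<longleftrightarrow> g 0 = 0 \<and> (\<forall>i\<le>m. g i \<le> n)"

text \<open>Yo n = Y[n]; Ym m n g = Y(g) for g : [m] \<rightarrow> [n].\<close>
definition Gop_functor ::
  "('o,'m) cat \<Rightarrow> (nat \<Rightarrow> 'o) \<Rightarrow> (nat \<Rightarrow> nat \<Rightarrow> (nat \<Rightarrow> nat) \<Rightarrow> 'm) \<Rightarrow> bool" where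
  "Gop_functor C Yo Ym \<longleftrightarrow>
     (\<forall>n. Yo n \<in> Obj C) \<and>
     (\<forall>m n g. Gamma_hom m n g \<longrightarrow> Ym m n g \<in> hom C (Yo m) (Yo n)) \<and>
     (\<forall>m n g g'. Gamma_hom m n g \<and> (\<forall>i\<le>m. g i = g' i) \<longrightarrow> Ym m n g = Ym m n g') \<and>
     (\<forall>n. Ym n n id = Id C (Yo n)) \<and>
     (\<forall>l m n f g. Gamma_hom l m f \<and> Gamma_hom m n g \<longrightarrow>
        Ym l n (g \<circ> f) = Comp C (Ym m n g) (Ym l m f))"

definition pi1 :: "nat \<Rightarrow> nat \<Rightarrow> nat \<Rightarrow> nat" where
  "pi1 m n i = (if i \<le> m then i else 0)"

definition pi2 :: "nat \<Rightarrow> nat \<Rightarrow> nat \<Rightarrow> nat" where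
  "pi2 m n i = (if i \<le> m then 0 else i - m)"

definition rho :: "nat \<Rightarrow> nat \<Rightarrow> nat \<Rightarrow> nat" where
  "rho n j i = (if i = j + 1 then 1 else 0)"

definition g_of :: "(nat \<Rightarrow> nat) \<Rightarrow> nat \<Rightarrow> nat" where
  "g_of f i = (if i = 0 then 0 else 1 + f (i - 1))"

definition X_ob :: "(nat \<Rightarrow> 'o) \<Rightarrow> nat \<Rightarrow> 'o" where
  "X_ob Yo n = Yo n"

definition X_mor :: "(nat \<Rightarrow> nat \<Rightarrow> (nat \<Rightarrow> nat) \<Rightarrow> 'm) \<Rightarrow> nat \<Rightarrow> nat \<Rightarrow> (nat \<Rightarrow> nat) \<Rightarrow> 'm" where
  "X_mor Ym n n' f = Ym n n' (g_of f)"

definition xi0 :: "('o,'m) cartesian \<Rightarrow> (nat \<Rightarrow> 'o) \<Rightarrow> 'm" where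
  "xi0 K Yo = Bang K (X_ob Yo 0)"

definition xi :: "('o,'m) cartesian \<Rightarrow> (nat \<Rightarrow> nat \<Rightarrow> (nat \<Rightarrow> nat) \<Rightarrow> 'm) \<Rightarrow> nat \<Rightarrow> nat \<Rightarrow> 'm" where
  "xi K Ym m n = Pair K (Ym (m + n) m (pi1 m n)) (Ym (m + n) n (pi2 m n))"

fun power :: "('o,'m) cartesian \<Rightarrow> 'o \<Rightarrow> nat \<Rightarrow> 'o" where
  "power K b 0 = Term K"
| "power K b (Suc n) = Prod K b (power K b n)"

fun tuple :: "('o,'m) cartesian \<Rightarrow> 'o \<Rightarrow> (nat \<Rightarrow> 'm) \<Rightarrow> nat \<Rightarrow> 'm" where
  "tuple K a fs 0 = Bang K a"
| "tuple K a fs (Suc n) = Pair K (fs 0) (tuple K a (\<lambda>i. fs (Suc i)) n)"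

end

theory Submission
  imports Defs
begin

text \<open>(1) and (2) coincide, since \<open>\<xi>\<^sub>0\<close> and \<open>\<xi>(m,n)\<close> are by construction the maps
  \<open>Y[0] \<rightarrow> 1\<close> and \<open>(Y(\<pi>\<^sup>1), Y(\<pi>\<^sup>2))\<close>. The Segal map of \<open>[n+1]\<close> factors as
  \<open>(id \<times> Segal(n)) \<circ> \<xi>(1,n)\<close>, so (2) gives (3) by induction on \<open>n\<close>, and conversely
  (3) gives every \<open>\<xi>(1,n)\<close> by two-out-of-three. The map \<open>\<xi>(0,n)\<close> is a section of the
  projection \<open>Y[0] \<times> Y[n] \<rightarrow> Y[n]\<close>, which is an equivalence once \<open>Y[0] \<rightarrow> 1\<close> is one.
  Finally, \<open>\<xi>\<close> is coassociative up to the associator \<open>\<alpha>\<close>,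
  \<open>(\<xi>(1,m) \<times> id) \<circ> \<xi>(1+m,n) = \<alpha> \<circ> (id \<times> \<xi>(m,n)) \<circ> \<xi>(1,m+n)\<close>,
  which yields \<open>\<xi>(m,n)\<close> by induction on \<open>m\<close>.\<close>

locale cartesian_category =
  fixes C :: "('o,'m) cat" and K :: "('o,'m) cartesian"
  assumes category: "category C" and cartesian: "cartesian_structure C K"
begin

lemma hom_objs: "f \<in> hom C a b \<Longrightarrow> a \<in> Obj C \<and> b \<in> Obj C"
  using category unfolding category_def hom_def by auto

lemma comp_hom: "f \<in> hom C a b \<Longrightarrow> g \<in> hom C b c \<Longrightarrow> Comp C g f \<in> hom C a c"
  using category unfolding category_def hom_def by auto

lemma id_hom: "a \<in> Obj C \<Longrightarrow> Id C a \<in> hom C a a"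
  using category unfolding category_def by auto

lemma comp_id_left: "f \<in> hom C a b \<Longrightarrow> Comp C (Id C b) f = f"
  using category unfolding category_def hom_def by auto

lemma comp_id_right: "f \<in> hom C a b \<Longrightarrow> Comp C f (Id C a) = f"
  using category unfolding category_def hom_def by auto

lemma comp_assoc: "f \<in> hom C a b \<Longrightarrow> g \<in> hom C b c \<Longrightarrow> h \<in> hom C c d \<Longrightarrow>
    Comp C h (Comp C g f) = Comp C (Comp C h g) f"
  using category unfolding category_def hom_def by auto

lemma iso_if_inverse:
  "f \<in> hom C a b \<Longrightarrow> g \<in> hom C b a \<Longrightarrow> Comp C g f = Id C a \<Longrightarrow> Comp C f g = Id C b \<Longrightarrow> iso C f"
  unfolding iso_def hom_def by auto

lemma prod_obj: "a \<in> Obj C \<Longrightarrow> b \<in> Obj C \<Longrightarrow> Prod K a b \<in> Obj C"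
  and pr1_hom: "a \<in> Obj C \<Longrightarrow> b \<in> Obj C \<Longrightarrow> Pr1 K a b \<in> hom C (Prod K a b) a"
  and pr2_hom: "a \<in> Obj C \<Longrightarrow> b \<in> Obj C \<Longrightarrow> Pr2 K a b \<in> hom C (Prod K a b) b"
  using cartesian unfolding cartesian_structure_def by auto

lemma term_obj: "Term K \<in> Obj C"
  and bang_hom: "a \<in> Obj C \<Longrightarrow> Bang K a \<in> hom C a (Term K)"
  and bang_unique: "a \<in> Obj C \<Longrightarrow> h \<in> hom C a (Term K) \<Longrightarrow> h = Bang K a"
  using cartesian unfolding cartesian_structure_def by auto

lemma pair_universal:
  assumes "f \<in> hom C c a" and "g \<in> hom C c b"
  shows "Pair K f g \<in> hom C c (Prod K a b) \<and>
    Comp C (Pr1 K a b) (Pair K f g) = f \<and> Comp C (Pr2 K a b) (Pair K f g) = g \<and>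
    (\<forall>h\<in>hom C c (Prod K a b). Comp C (Pr1 K a b) h = f \<and> Comp C (Pr2 K a b) h = g
       \<longrightarrow> h = Pair K f g)"
  using cartesian assms hom_objs[OF assms(1)] hom_objs[OF assms(2)]
  unfolding cartesian_structure_def by blast

lemma pair_hom: "f \<in> hom C c a \<Longrightarrow> g \<in> hom C c b \<Longrightarrow> Pair K f g \<in> hom C c (Prod K a b)"
  and pr1_pair: "f \<in> hom C c a \<Longrightarrow> g \<in> hom C c b \<Longrightarrow> Comp C (Pr1 K a b) (Pair K f g) = f"
  and pr2_pair: "f \<in> hom C c a \<Longrightarrow> g \<in> hom C c b \<Longrightarrow> Comp C (Pr2 K a b) (Pair K f g) = g"
  and pair_unique: "f \<in> hom C c a \<Longrightarrow> g \<in> hom C c b \<Longrightarrow> h \<in> hom C c (Prod K a b) \<Longrightarrow>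
    Comp C (Pr1 K a b) h = f \<Longrightarrow> Comp C (Pr2 K a b) h = g \<Longrightarrow> h = Pair K f g"
  using pair_universal by blast+

lemma pair_eta: "a \<in> Obj C \<Longrightarrow> b \<in> Obj C \<Longrightarrow> h \<in> hom C c (Prod K a b) \<Longrightarrow>
    h = Pair K (Comp C (Pr1 K a b) h) (Comp C (Pr2 K a b) h)"
  by (rule pair_unique) (auto intro: comp_hom pr1_hom pr2_hom)

lemma pair_pr1_pr2: "a \<in> Obj C \<Longrightarrow> b \<in> Obj C \<Longrightarrow> Pair K (Pr1 K a b) (Pr2 K a b) = Id C (Prod K a b)"
  using pair_eta[OF _ _ id_hom[OF prod_obj]] comp_id_right[OF pr1_hom] comp_id_right[OF pr2_hom]
  by metis

lemma pair_comp:
  assumes f: "f \<in> hom C c a" and g: "g \<in> hom C c b" and h: "h \<in> hom C d c"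
  shows "Comp C (Pair K f g) h = Pair K (Comp C f h) (Comp C g h)"
proof -
  have ab: "a \<in> Obj C" "b \<in> Obj C" using f g hom_objs by auto
  have fg: "Pair K f g \<in> hom C c (Prod K a b)" using pair_hom[OF f g] .
  show ?thesis
    using pair_unique[OF comp_hom[OF h f] comp_hom[OF h g] comp_hom[OF h fg]]
      comp_assoc[OF h fg pr1_hom[OF ab]] comp_assoc[OF h fg pr2_hom[OF ab]]
      pr1_pair[OF f g] pr2_pair[OF f g]
    by simp
qed

lemma tensor_unfold: "f \<in> hom C a b \<Longrightarrow> f' \<in> hom C a' b' \<Longrightarrow>
    tensor C K f f' = Pair K (Comp C f (Pr1 K a a')) (Comp C f' (Pr2 K a a'))"
  by (simp add: tensor_def hom_def)

lemma tensor_hom: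
  assumes f: "f \<in> hom C a b" and f': "f' \<in> hom C a' b'"
  shows "tensor C K f f' \<in> hom C (Prod K a a') (Prod K b b')"
  using hom_objs[OF f] hom_objs[OF f']
  by (simp add: tensor_unfold[OF f f'] pair_hom comp_hom[OF pr1_hom f] comp_hom[OF pr2_hom f'])

lemma tensor_pair:
  assumes f: "f \<in> hom C a b" and f': "f' \<in> hom C a' b'"
    and g: "g \<in> hom C c a" and g': "g' \<in> hom C c a'"
  shows "Comp C (tensor C K f f') (Pair K g g') = Pair K (Comp C f g) (Comp C f' g')"
proof -
  have o: "a \<in> Obj C" "a' \<in> Obj C" using f f' hom_objs by auto
  note gg' = pair_hom[OF g g']
  show ?thesis
    unfolding tensor_unfold[OF f f']
    using pair_comp[OF comp_hom[OF pr1_hom[OF o] f] comp_hom[OF pr2_hom[OF o] f'] gg']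
      comp_assoc[OF gg' pr1_hom[OF o] f] comp_assoc[OF gg' pr2_hom[OF o] f']
      pr1_pair[OF g g'] pr2_pair[OF g g']
    by simp
qed

lemma pr2_tensor:
  assumes f: "f \<in> hom C a b" and f': "f' \<in> hom C a' b'"
  shows "Comp C (Pr2 K b b') (tensor C K f f') = Comp C f' (Pr2 K a a')"
proof -
  have o: "a \<in> Obj C" "a' \<in> Obj C" using f f' hom_objs by auto
  show ?thesis
    unfolding tensor_unfold[OF f f']
    by (rule pr2_pair[OF comp_hom[OF pr1_hom[OF o] f] comp_hom[OF pr2_hom[OF o] f']])
qed

lemma iso_pr2_term:
  assumes b: "b \<in> Obj C"
  shows "iso C (Pr2 K (Term K) b)"
proof (rule iso_if_inverse[OF pr2_hom[OF term_obj b] pair_hom[OF bang_hom[OF b] id_hom[OF b]]])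
  note p1 = pr1_hom[OF term_obj b] and p2 = pr2_hom[OF term_obj b]
  have "Comp C (Bang K b) (Pr2 K (Term K) b) = Pr1 K (Term K) b"
    using bang_unique[OF prod_obj[OF term_obj b] comp_hom[OF p2 bang_hom[OF b]]]
      bang_unique[OF prod_obj[OF term_obj b] p1] by simp
  then show "Comp C (Pair K (Bang K b) (Id C b)) (Pr2 K (Term K) b) = Id C (Prod K (Term K) b)"
    using pair_comp[OF bang_hom[OF b] id_hom[OF b] p2] comp_id_left[OF p2] pair_pr1_pr2[OF term_obj b]
    by simp
qed (rule pr2_pair[OF bang_hom[OF b] id_hom[OF b]])

definition reassoc_left :: "'o \<Rightarrow> 'o \<Rightarrow> 'o \<Rightarrow> 'm" where
  "reassoc_left a b c =
     Pair K (Pair K (Pr1 K a (Prod K b c)) (Comp C (Pr1 K b c) (Pr2 K a (Prod K b c))))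
            (Comp C (Pr2 K b c) (Pr2 K a (Prod K b c)))"

definition reassoc_right :: "'o \<Rightarrow> 'o \<Rightarrow> 'o \<Rightarrow> 'm" where
  "reassoc_right a b c =
     Pair K (Comp C (Pr1 K a b) (Pr1 K (Prod K a b) c))
            (Pair K (Comp C (Pr2 K a b) (Pr1 K (Prod K a b) c)) (Pr2 K (Prod K a b) c))"

context
  fixes a b c assumes a: "a \<in> Obj C" and b: "b \<in> Obj C" and c: "c \<in> Obj C"
begin

private lemma proj_homs:
  "Pr1 K a (Prod K b c) \<in> hom C (Prod K a (Prod K b c)) a"
  "Pr2 K a (Prod K b c) \<in> hom C (Prod K a (Prod K b c)) (Prod K b c)"
  "Pr1 K b c \<in> hom C (Prod K b c) b" "Pr2 K b c \<in> hom C (Prod K b c) c"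
  "Pr1 K (Prod K a b) c \<in> hom C (Prod K (Prod K a b) c) (Prod K a b)"
  "Pr2 K (Prod K a b) c \<in> hom C (Prod K (Prod K a b) c) c"
  "Pr1 K a b \<in> hom C (Prod K a b) a" "Pr2 K a b \<in> hom C (Prod K a b) b"
  using a b c by (simp_all add: pr1_hom pr2_hom prod_obj)

lemma reassoc_left_hom: "reassoc_left a b c \<in> hom C (Prod K a (Prod K b c)) (Prod K (Prod K a b) c)"
  unfolding reassoc_left_def
  by (rule pair_hom[OF pair_hom[OF proj_homs(1) comp_hom[OF proj_homs(2,3)]]
        comp_hom[OF proj_homs(2,4)]])

lemma reassoc_right_hom: "reassoc_right a b c \<in> hom C (Prod K (Prod K a b) c) (Prod K a (Prod K b c))"
  unfolding reassoc_right_def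
  by (rule pair_hom[OF comp_hom[OF proj_homs(5,7)]
        pair_hom[OF comp_hom[OF proj_homs(5,8)] proj_homs(6)]])

lemma reassoc_left_pair:
  assumes x: "x \<in> hom C d a" and y: "y \<in> hom C d b" and z: "z \<in> hom C d c"
  shows "Comp C (reassoc_left a b c) (Pair K x (Pair K y z)) = Pair K (Pair K x y) z"
proof -
  note yz = pair_hom[OF y z]
  note p = pair_hom[OF x yz]
  have "Comp C (Comp C (Pr1 K b c) (Pr2 K a (Prod K b c))) (Pair K x (Pair K y z)) = y"
    using comp_assoc[OF p proj_homs(2,3)] pr2_pair[OF x yz] pr1_pair[OF y z] by simp
  moreover have "Comp C (Comp C (Pr2 K b c) (Pr2 K a (Prod K b c))) (Pair K x (Pair K y z)) = z"
    using comp_assoc[OF p proj_homs(2,4)] pr2_pair[OF x yz] pr2_pair[OF y z] by simp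
  ultimately show ?thesis
    unfolding reassoc_left_def
    by (simp add: pair_comp[OF pair_hom[OF proj_homs(1) comp_hom[OF proj_homs(2,3)]]
        comp_hom[OF proj_homs(2,4)] p] pair_comp[OF proj_homs(1) comp_hom[OF proj_homs(2,3)] p]
        pr1_pair[OF x yz])
qed

lemma reassoc_right_pair:
  assumes x: "x \<in> hom C d a" and y: "y \<in> hom C d b" and z: "z \<in> hom C d c"
  shows "Comp C (reassoc_right a b c) (Pair K (Pair K x y) z) = Pair K x (Pair K y z)"
proof -
  note xy = pair_hom[OF x y]
  note p = pair_hom[OF xy z]
  have "Comp C (Comp C (Pr1 K a b) (Pr1 K (Prod K a b) c)) (Pair K (Pair K x y) z) = x"
    using comp_assoc[OF p proj_homs(5,7)] pr1_pair[OF xy z] pr1_pair[OF x y] by simp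
  moreover have "Comp C (Comp C (Pr2 K a b) (Pr1 K (Prod K a b) c)) (Pair K (Pair K x y) z) = y"
    using comp_assoc[OF p proj_homs(5,8)] pr1_pair[OF xy z] pr2_pair[OF x y] by simp
  ultimately show ?thesis
    unfolding reassoc_right_def
    by (simp add: pair_comp[OF comp_hom[OF proj_homs(5,7)]
        pair_hom[OF comp_hom[OF proj_homs(5,8)] proj_homs(6)] p]
        pair_comp[OF comp_hom[OF proj_homs(5,8)] proj_homs(6) p] pr2_pair[OF xy z])
qed

lemma iso_reassoc_left: "iso C (reassoc_left a b c)"
proof (rule iso_if_inverse[OF reassoc_left_hom reassoc_right_hom])
  let ?x = "Pr1 K a (Prod K b c)"
    and ?y = "Comp C (Pr1 K b c) (Pr2 K a (Prod K b c))"
    and ?z = "Comp C (Pr2 K b c) (Pr2 K a (Prod K b c))"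
  have xyz: "?x \<in> hom C (Prod K a (Prod K b c)) a" "?y \<in> hom C (Prod K a (Prod K b c)) b"
    "?z \<in> hom C (Prod K a (Prod K b c)) c"
    by (rule proj_homs comp_hom[OF proj_homs(2,3)] comp_hom[OF proj_homs(2,4)])+
  have eta: "Pair K ?x (Pair K ?y ?z) = Id C (Prod K a (Prod K b c))"
    using pair_eta[OF b c proj_homs(2)] pair_pr1_pr2[OF a prod_obj[OF b c]] by simp
  have "Comp C (reassoc_right a b c) (reassoc_left a b c)
      = Comp C (reassoc_right a b c) (Comp C (reassoc_left a b c) (Pair K ?x (Pair K ?y ?z)))"
    by (simp add: eta comp_id_right[OF reassoc_left_hom])
  also have "\<dots> = Pair K ?x (Pair K ?y ?z)"
    by (simp add: reassoc_left_pair[OF xyz] reassoc_right_pair[OF xyz])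
  finally show "Comp C (reassoc_right a b c) (reassoc_left a b c) = Id C (Prod K a (Prod K b c))"
    by (simp add: eta)
next
  let ?u = "Comp C (Pr1 K a b) (Pr1 K (Prod K a b) c)"
    and ?v = "Comp C (Pr2 K a b) (Pr1 K (Prod K a b) c)"
    and ?w = "Pr2 K (Prod K a b) c"
  have uvw: "?u \<in> hom C (Prod K (Prod K a b) c) a" "?v \<in> hom C (Prod K (Prod K a b) c) b"
    "?w \<in> hom C (Prod K (Prod K a b) c) c"
    by (rule comp_hom[OF proj_homs(5,7)] comp_hom[OF proj_homs(5,8)] proj_homs)+
  have eta: "Pair K (Pair K ?u ?v) ?w = Id C (Prod K (Prod K a b) c)"
    using pair_eta[OF a b proj_homs(5)] pair_pr1_pr2[OF prod_obj[OF a b] c] by simp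
  have "Comp C (reassoc_left a b c) (reassoc_right a b c)
      = Comp C (reassoc_left a b c) (Comp C (reassoc_right a b c) (Pair K (Pair K ?u ?v) ?w))"
    by (simp add: eta comp_id_right[OF reassoc_right_hom])
  also have "\<dots> = Pair K (Pair K ?u ?v) ?w"
    by (simp add: reassoc_left_pair[OF uvw] reassoc_right_pair[OF uvw])
  finally show "Comp C (reassoc_left a b c) (reassoc_right a b c) = Id C (Prod K (Prod K a b) c)"
    by (simp add: eta)
qed

end

lemma tuple_hom: "(\<And>i. i < n \<Longrightarrow> fs i \<in> hom C a b) \<Longrightarrow> a \<in> Obj C \<Longrightarrow> b \<in> Obj C \<Longrightarrow>
    tuple K a fs n \<in> hom C a (power K b n)"
  by (induction n arbitrary: fs) (auto simp: bang_hom pair_hom)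

lemma tuple_comp:
  "f \<in> hom C a c \<Longrightarrow> (\<And>i. i < n \<Longrightarrow> gs i \<in> hom C c b) \<Longrightarrow> b \<in> Obj C \<Longrightarrow>
    Comp C (tuple K c gs n) f = tuple K a (\<lambda>i. Comp C (gs i) f) n"
proof (induction n arbitrary: gs)
  case 0
  then show ?case using bang_unique comp_hom bang_hom hom_objs by force
next
  case (Suc n)
  have tl: "tuple K c (\<lambda>i. gs (Suc i)) n \<in> hom C c (power K b n)"
    using Suc.prems hom_objs by (auto intro: tuple_hom)
  have "Comp C (tuple K c gs (Suc n)) f
      = Pair K (Comp C (gs 0) f) (Comp C (tuple K c (\<lambda>i. gs (Suc i)) n) f)"
    using pair_comp[OF Suc.prems(2)[of 0] tl Suc.prems(1)] by simp
  then show ?case using Suc by simp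
qed

end

locale cartesian_equivalences =
  fixes C :: "('o,'m) cat" and K :: "('o,'m) cartesian" and E :: "'m set"
  assumes equivalences: "cartesian_cat_with_equivalences C K E"

sublocale cartesian_equivalences \<subseteq> cartesian_category
  using equivalences unfolding cartesian_cat_with_equivalences_def by unfold_locales auto

context cartesian_equivalences
begin

lemma iso_in_E: "iso C f \<Longrightarrow> f \<in> E"
  using equivalences unfolding cartesian_cat_with_equivalences_def by auto

lemma comp_in_E: "f \<in> hom C a b \<Longrightarrow> g \<in> hom C b c \<Longrightarrow> f \<in> E \<Longrightarrow> g \<in> E \<Longrightarrow> Comp C g f \<in> E"
  using equivalences unfolding cartesian_cat_with_equivalences_def hom_def by auto

lemma in_E_left_cancel:
  "f \<in> hom C a b \<Longrightarrow> g \<in> hom C b c \<Longrightarrow> g \<in> E \<Longrightarrow> Comp C g f \<in> E \<Longrightarrow> f \<in> E"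
  using equivalences unfolding cartesian_cat_with_equivalences_def hom_def by auto

lemma tensor_in_E: "f \<in> E \<Longrightarrow> f' \<in> E \<Longrightarrow> tensor C K f f' \<in> E"
  using equivalences unfolding cartesian_cat_with_equivalences_def by auto

lemma id_in_E: "a \<in> Obj C \<Longrightarrow> Id C a \<in> E"
  by (intro iso_in_E iso_if_inverse[OF id_hom id_hom] comp_id_left[OF id_hom])

lemma pr2_in_E:
  assumes bang: "Bang K a \<in> E" and a: "a \<in> Obj C" and b: "b \<in> Obj C"
  shows "Pr2 K a b \<in> E"
proof -
  have "Pr2 K a b = Comp C (Pr2 K (Term K) b) (tensor C K (Bang K a) (Id C b))"
    using pr2_tensor[OF bang_hom[OF a] id_hom[OF b]] comp_id_left[OF pr2_hom[OF a b]] by simp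
  also have "\<dots> \<in> E"
    using comp_in_E[OF tensor_hom[OF bang_hom[OF a] id_hom[OF b]] pr2_hom[OF term_obj b]]
      tensor_in_E[OF bang id_in_E[OF b]] iso_in_E[OF iso_pr2_term[OF b]] by blast
  finally show ?thesis .
qed

lemma reassoc_left_in_E: "a \<in> Obj C \<Longrightarrow> b \<in> Obj C \<Longrightarrow> c \<in> Obj C \<Longrightarrow> reassoc_left a b c \<in> E"
  by (rule iso_in_E[OF iso_reassoc_left])

end

locale Gamma_object = cartesian_category C K
  for C :: "('o,'m) cat" and K :: "('o,'m) cartesian" +
  fixes Yo :: "nat \<Rightarrow> 'o" and Ym :: "nat \<Rightarrow> nat \<Rightarrow> (nat \<Rightarrow> nat) \<Rightarrow> 'm"
  assumes Y_functor: "Gop_functor C Yo Ym"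
begin

lemma Yo_obj: "Yo n \<in> Obj C"
  and Ym_hom: "Gamma_hom m n g \<Longrightarrow> Ym m n g \<in> hom C (Yo m) (Yo n)"
  and Ym_id: "Ym n n id = Id C (Yo n)"
  and Ym_comp: "Gamma_hom l m f \<Longrightarrow> Gamma_hom m n g \<Longrightarrow> Ym l n (g \<circ> f) = Comp C (Ym m n g) (Ym l m f)"
  using Y_functor unfolding Gop_functor_def by blast+

lemma Ym_cong: "Gamma_hom m n g \<Longrightarrow> (\<And>i. i \<le> m \<Longrightarrow> g i = g' i) \<Longrightarrow> Ym m n g = Ym m n g'"
  using Y_functor unfolding Gop_functor_def by blast

lemma Ym_comp_eq:
  assumes "Gamma_hom l m f" and "Gamma_hom m n g" and "\<And>i. i \<le> l \<Longrightarrow> g (f i) = h i"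
  shows "Comp C (Ym m n g) (Ym l m f) = Ym l n h"
proof -
  have "Gamma_hom l n (g \<circ> f)"
    using assms(1,2) unfolding Gamma_hom_def by auto
  then show ?thesis
    using Ym_comp[OF assms(1,2)] Ym_cong[of l n "g \<circ> f" h] assms(3) by simp
qed

lemma Gamma_hom_pi1: "Gamma_hom (m + n) m (pi1 m n)"
  and Gamma_hom_pi2: "Gamma_hom (m + n) n (pi2 m n)"
  and Gamma_hom_rho: "Gamma_hom n 1 (rho n j)"
  unfolding Gamma_hom_def pi1_def pi2_def rho_def by auto

lemma xi_hom: "xi K Ym m n \<in> hom C (Yo (m + n)) (Prod K (Yo m) (Yo n))"
  unfolding xi_def by (rule pair_hom[OF Ym_hom[OF Gamma_hom_pi1] Ym_hom[OF Gamma_hom_pi2]])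

lemma xi_comp:
  assumes f: "Gamma_hom l (m + n) f"
  shows "Comp C (xi K Ym m n) (Ym l (m + n) f) = Pair K (Ym l m (pi1 m n \<circ> f)) (Ym l n (pi2 m n \<circ> f))"
  unfolding xi_def
  using pair_comp[OF Ym_hom[OF Gamma_hom_pi1] Ym_hom[OF Gamma_hom_pi2] Ym_hom[OF f]]
    Ym_comp[OF f Gamma_hom_pi1] Ym_comp[OF f Gamma_hom_pi2] by simp

abbreviation segal_map :: "nat \<Rightarrow> 'm" where
  "segal_map n \<equiv> tuple K (Yo n) (\<lambda>j. Ym n 1 (rho n j)) n"

lemma segal_map_hom: "segal_map n \<in> hom C (Yo n) (power K (Yo 1) n)"
  using tuple_hom[OF Ym_hom[OF Gamma_hom_rho] Yo_obj Yo_obj] .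

lemma segal_map_Suc:
  "segal_map (Suc n) = Comp C (tensor C K (Id C (Yo 1)) (segal_map n)) (xi K Ym 1 n)"
proof -
  have p1: "Ym (Suc n) 1 (pi1 1 n) \<in> hom C (Yo (Suc n)) (Yo 1)"
    and p2: "Ym (Suc n) n (pi2 1 n) \<in> hom C (Yo (Suc n)) (Yo n)"
    using Ym_hom[OF Gamma_hom_pi1, of 1 n] Ym_hom[OF Gamma_hom_pi2, of 1 n] by simp_all
  have head: "Ym (Suc n) 1 (pi1 1 n) = Ym (Suc n) 1 (rho (Suc n) 0)"
    by (rule Ym_cong) (auto simp: Gamma_hom_def pi1_def rho_def)
  have tail: "Comp C (Ym n 1 (rho n j)) (Ym (Suc n) n (pi2 1 n)) = Ym (Suc n) 1 (rho (Suc n) (Suc j))"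
    for j
    using Gamma_hom_pi2[of 1 n] by (intro Ym_comp_eq Gamma_hom_rho) (auto simp: pi2_def rho_def)
  have "Comp C (tensor C K (Id C (Yo 1)) (segal_map n)) (xi K Ym 1 n)
      = Pair K (Ym (Suc n) 1 (pi1 1 n)) (Comp C (segal_map n) (Ym (Suc n) n (pi2 1 n)))"
    unfolding xi_def
    using tensor_pair[OF id_hom[OF Yo_obj] segal_map_hom p1 p2] comp_id_left[OF p1] by simp
  also have "\<dots> = segal_map (Suc n)"
    using tuple_comp[OF p2 Ym_hom[OF Gamma_hom_rho] Yo_obj] head tail by simp
  finally show ?thesis ..
qed

lemma pr2_comp_xi_0: "Comp C (Pr2 K (Yo 0) (Yo n)) (xi K Ym 0 n) = Id C (Yo n)"
proof -
  have "Comp C (Pr2 K (Yo 0) (Yo n)) (xi K Ym 0 n) = Ym n n (pi2 0 n)"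
    unfolding xi_def using pr2_pair[OF Ym_hom[OF Gamma_hom_pi1] Ym_hom[OF Gamma_hom_pi2], of 0 n]
    by simp
  also have "\<dots> = Ym n n id"
    by (rule Ym_cong) (auto simp: Gamma_hom_def pi2_def)
  finally show ?thesis by (simp add: Ym_id)
qed

lemma xi_coassoc:
  "Comp C (tensor C K (xi K Ym 1 m) (Id C (Yo n))) (xi K Ym (Suc m) n)
 = Comp C (reassoc_left (Yo 1) (Yo m) (Yo n))
     (Comp C (tensor C K (Id C (Yo 1)) (xi K Ym m n)) (xi K Ym 1 (m + n)))"
proof -
  have left: "Comp C (tensor C K (xi K Ym 1 m) (Id C (Yo n))) (xi K Ym (Suc m) n)
    = Pair K (Pair K (Ym (Suc (m + n)) 1 (pi1 1 m \<circ> pi1 (Suc m) n))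
                     (Ym (Suc (m + n)) m (pi2 1 m \<circ> pi1 (Suc m) n)))
             (Ym (Suc (m + n)) n (pi2 (Suc m) n))"
  proof -
    have q1: "Ym (Suc (m + n)) (Suc m) (pi1 (Suc m) n) \<in> hom C (Yo (Suc (m + n))) (Yo (Suc m))"
      and q2: "Ym (Suc (m + n)) n (pi2 (Suc m) n) \<in> hom C (Yo (Suc (m + n))) (Yo n)"
      using Ym_hom[OF Gamma_hom_pi1, of "Suc m" n] Ym_hom[OF Gamma_hom_pi2, of "Suc m" n] by simp_all
    show ?thesis
      using tensor_pair[OF xi_hom[of 1 m, simplified] id_hom[OF Yo_obj] q1 q2] comp_id_left[OF q2]
        xi_comp[of "Suc (m + n)" 1 m "pi1 (Suc m) n"] Gamma_hom_pi1[of "Suc m" n]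
      by (simp add: xi_def[of K Ym "Suc m" n])
  qed
  have right: "Comp C (tensor C K (Id C (Yo 1)) (xi K Ym m n)) (xi K Ym 1 (m + n))
    = Pair K (Ym (Suc (m + n)) 1 (pi1 1 (m + n)))
             (Pair K (Ym (Suc (m + n)) m (pi1 m n \<circ> pi2 1 (m + n)))
                     (Ym (Suc (m + n)) n (pi2 m n \<circ> pi2 1 (m + n))))"
  proof -
    have q1: "Ym (Suc (m + n)) 1 (pi1 1 (m + n)) \<in> hom C (Yo (Suc (m + n))) (Yo 1)"
      and q2: "Ym (Suc (m + n)) (m + n) (pi2 1 (m + n)) \<in> hom C (Yo (Suc (m + n))) (Yo (m + n))"
      using Ym_hom[OF Gamma_hom_pi1, of 1 "m + n"] Ym_hom[OF Gamma_hom_pi2, of 1 "m + n"] by simp_all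
    show ?thesis
      unfolding xi_def[of K Ym 1 "m + n"]
      using tensor_pair[OF id_hom[OF Yo_obj] xi_hom q1 q2] comp_id_left[OF q1]
        xi_comp[of "Suc (m + n)" m n "pi2 1 (m + n)"] Gamma_hom_pi2[of 1 "m + n"]
      by simp
  qed
  have "Ym (Suc (m + n)) 1 (pi1 1 m \<circ> pi1 (Suc m) n) = Ym (Suc (m + n)) 1 (pi1 1 (m + n))"
    and "Ym (Suc (m + n)) m (pi2 1 m \<circ> pi1 (Suc m) n) = Ym (Suc (m + n)) m (pi1 m n \<circ> pi2 1 (m + n))"
    and "Ym (Suc (m + n)) n (pi2 (Suc m) n) = Ym (Suc (m + n)) n (pi2 m n \<circ> pi2 1 (m + n))"
    by (rule Ym_cong; auto simp: Gamma_hom_def pi1_def pi2_def)+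
  moreover have "Ym (Suc (m + n)) 1 (pi1 1 (m + n)) \<in> hom C (Yo (Suc (m + n))) (Yo 1)"
    and "Ym (Suc (m + n)) m (pi1 m n \<circ> pi2 1 (m + n)) \<in> hom C (Yo (Suc (m + n))) (Yo m)"
    and "Ym (Suc (m + n)) n (pi2 m n \<circ> pi2 1 (m + n)) \<in> hom C (Yo (Suc (m + n))) (Yo n)"
    by (rule Ym_hom; auto simp: Gamma_hom_def pi1_def pi2_def)+
  ultimately show ?thesis
    using left right reassoc_left_pair[OF Yo_obj Yo_obj Yo_obj] by simp
qed

end

locale Gamma_object_with_equivalences =
  Gamma_object C K Yo Ym + cartesian_equivalences C K E
  for C :: "('o,'m) cat" and K :: "('o,'m) cartesian"
    and Yo :: "nat \<Rightarrow> 'o" and Ym :: "nat \<Rightarrow> nat \<Rightarrow> (nat \<Rightarrow> nat) \<Rightarrow> 'm" and E :: "'m set"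
begin

lemma segal_map_in_E:
  assumes xi: "\<And>m n. xi K Ym m n \<in> E" and bang: "Bang K (Yo 0) \<in> E"
  shows "segal_map n \<in> E"
proof (induction n)
  case 0
  then show ?case using bang by simp
next
  case (Suc n)
  have "Comp C (tensor C K (Id C (Yo 1)) (segal_map n)) (xi K Ym 1 n) \<in> E"
    using comp_in_E[OF xi_hom tensor_hom[OF id_hom[OF Yo_obj] segal_map_hom]]
      xi tensor_in_E[OF id_in_E[OF Yo_obj] Suc] by simp
  then show ?case by (simp only: segal_map_Suc)
qed

lemma xi_in_E:
  assumes segal: "\<And>n. segal_map n \<in> E"
  shows "xi K Ym m n \<in> E"
proof -
  have xi_1: "xi K Ym 1 k \<in> E" for k
  proof -
    have "Comp C (tensor C K (Id C (Yo 1)) (segal_map k)) (xi K Ym 1 k) \<in> E"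
      using segal[of "Suc k"] by (simp only: segal_map_Suc)
    then show ?thesis
      using in_E_left_cancel[OF xi_hom[of 1 k] tensor_hom[OF id_hom[OF Yo_obj] segal_map_hom]]
        tensor_in_E[OF id_in_E[OF Yo_obj] segal] by blast
  qed
  show ?thesis
  proof (induction m arbitrary: n)
    case 0
    have "Bang K (Yo 0) \<in> E" using segal[of 0] by simp
    then show ?case
      using in_E_left_cancel[OF xi_hom[of 0 n] pr2_hom[OF Yo_obj Yo_obj]]
        pr2_in_E[OF _ Yo_obj Yo_obj] pr2_comp_xi_0 id_in_E[OF Yo_obj] by simp
  next
    case (Suc m)
    note xi_1m = xi_hom[of 1 "m + n"] and id_xi = tensor_hom[OF id_hom[OF Yo_obj] xi_hom[of m n]]
    have "Comp C (tensor C K (Id C (Yo 1)) (xi K Ym m n)) (xi K Ym 1 (m + n)) \<in> E"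
      using comp_in_E[OF xi_1m id_xi xi_1 tensor_in_E[OF id_in_E[OF Yo_obj] Suc.IH]] .
    then have "Comp C (reassoc_left (Yo 1) (Yo m) (Yo n))
        (Comp C (tensor C K (Id C (Yo 1)) (xi K Ym m n)) (xi K Ym 1 (m + n))) \<in> E"
      using comp_in_E[OF comp_hom[OF xi_1m id_xi] reassoc_left_hom[OF Yo_obj Yo_obj Yo_obj]]
        reassoc_left_in_E[OF Yo_obj Yo_obj Yo_obj] by blast
    then have "Comp C (tensor C K (xi K Ym 1 m) (Id C (Yo n))) (xi K Ym (Suc m) n) \<in> E"
      by (simp only: xi_coassoc)
    then show ?case
      using in_E_left_cancel[OF xi_hom[of "Suc m" n, simplified]
          tensor_hom[OF xi_hom[of 1 m, simplified] id_hom[OF Yo_obj]]]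
        tensor_in_E[OF xi_1 id_in_E[OF Yo_obj]]
      by simp
  qed
qed

lemma xi_in_E_iff_segal_map_in_E:
  "((\<forall>m n. xi K Ym m n \<in> E) \<and> Bang K (Yo 0) \<in> E) \<longleftrightarrow> (\<forall>n. segal_map n \<in> E)"
  using segal_map_in_E xi_in_E tuple.simps(1) by metis

end

theorem proposition3p1p2:
  fixes C :: "('o,'m) cat" and K :: "('o,'m) cartesian" and E :: "'m set"
    and Yo :: "nat \<Rightarrow> 'o" and Ym :: "nat \<Rightarrow> nat \<Rightarrow> (nat \<Rightarrow> nat) \<Rightarrow> 'm"
  assumes "cartesian_cat_with_equivalences C K E"
    and "Gop_functor C Yo Ym"
  shows "((xi0 K Yo \<in> E \<and> (\<forall>m n. xi K Ym m n \<in> E))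
          \<longleftrightarrow> ((\<forall>m n. Pair K (Ym (m + n) m (pi1 m n)) (Ym (m + n) n (pi2 m n)) \<in> E)
               \<and> Bang K (Yo 0) \<in> E))
       \<and> (((\<forall>m n. Pair K (Ym (m + n) m (pi1 m n)) (Ym (m + n) n (pi2 m n)) \<in> E)
               \<and> Bang K (Yo 0) \<in> E)
          \<longleftrightarrow> (\<forall>n. tuple K (Yo n) (\<lambda>j. Ym n 1 (rho n j)) n \<in> E))"
proof -
  interpret Gamma_object_with_equivalences C K Yo Ym E
  proof unfold_locales
    show "category C" and "cartesian_structure C K"
      using assms(1) unfolding cartesian_cat_with_equivalences_def by blast+
  qed (fact assms)+
  show ?thesis
    using xi_in_E_iff_segal_map_in_E unfolding xi0_def X_ob_def xi_def[symmetric] by blast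
qed

end
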